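(* Let $\lambda_1,\lambda_2>0$, $\nu\in(0,1)$ and set $c_\nu:=\nu^{\nu/(1-\nu)}-\nu^{1/(1-\nu)}$. Define $$I^{(1)}_{\mathrm{MD}}(x):=\begin{cases}c_\nu\left(\frac{x}{\lambda_1}\right)^{1/(1-\nu)} & x\geq0,\\ c_\nu\left(\frac{x}{-\lambda_2}\right)^{1/(1-\nu)} & x<0,\end{cases}$$ and define $I^{(2)}_{\mathrm{MD},\underline{\lambda}}$ as follows: if $\lambda_1=\lambda_2=\lambda$, $I^{(2)}_{\mathrm{MD},\underline{\lambda}}(x):=((\nu/2)^{\nu/(2-\nu)}-(\nu/2)^{2/(2-\nu)})\left(\frac{x^2}{\lambda}\right)^{1/(2-\nu)}$ for all $x\in\mathbb{R}$; if $\lambda_1>\lambda_2$, $I^{(2)}_{\mathrm{MD},\underline{\lambda}}(x):=c_\nu\left(\frac{x}{\lambda_1-\lambda_2}\right)^{1/(1-\nu)}$ for $x\geq0$ and $:=\infty$ for $x<0$; if $\lambda_1<\lambda_2$, $I^{(2)}_{\mathrm{MD},\underline{\lambda}}(x):=c_\nu\left(\frac{x}{-(\lambda_2-\lambda_1)}\right)^{1/(1-\nu)}$ for $x\leq0$ and $:=\infty$ for $x>0$. Then $I^{(1)}_{\mathrm{MD}}(0)=I^{(2)}_{\mathrm{MD},\underline{\lambda}}(0)=0$, and for $x\neq0$: (1) if $\lambda_1\neq\lambda_2$, then $I^{(2)}_{\mathrm{MD},\underline{\lambda}}(x)>I^{(1)}_{\mathrm{MD}}(x)>0$; (2) if $\lambda_1=\lambda_2=\lambda$,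 there exists $\delta_{\nu,\lambda}>0$ such that $I^{(2)}_{\mathrm{MD},\underline{\lambda}}(x)>I^{(1)}_{\mathrm{MD}}(x)>0$ if $0<|x|<\delta_{\nu,\lambda}$, $I^{(1)}_{\mathrm{MD}}(x)>I^{(2)}_{\mathrm{MD},\underline{\lambda}}(x)>0$ if $|x|>\delta_{\nu,\lambda}$, and $I^{(2)}_{\mathrm{MD},\underline{\lambda}}(x)=I^{(1)}_{\mathrm{MD}}(x)>0$ if $|x|=\delta_{\nu,\lambda}$.
   Context: In the paper these are the moderate deviation rate functions for the fractional Skellam processes of type 1 and type 2 respectively; the claim concerns only the explicitly defined functions above. *)

theory Defs
  imports Complex_Main "HOL-Library.Extended_Real"
begin

definition c_nu :: "real \<Rightarrow> real" where
  "c_nu \<nu> = \<nu> powr (\<nu> / (1 - \<nu>)) - \<nu> powr (1 / (1 - \<nu>))"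

definition I1_MD :: "real \<Rightarrow> real \<Rightarrow> real \<Rightarrow> real \<Rightarrow> real" where
  "I1_MD \<nu> l1 l2 x =
     (if x \<ge> 0 then c_nu \<nu> * (x / l1) powr (1 / (1 - \<nu>))
      else c_nu \<nu> * (x / (- l2)) powr (1 / (1 - \<nu>)))"

definition I2_MD :: "real \<Rightarrow> real \<Rightarrow> real \<Rightarrow> real \<Rightarrow> ereal" where
  "I2_MD \<nu> l1 l2 x =
     (if l1 = l2 then
        ereal (((\<nu>/2) powr (\<nu> / (2 - \<nu>)) - (\<nu>/2) powr (2 / (2 - \<nu>)))
               * (x^2 / l1) powr (1 / (2 - \<nu>)))
      else if l1 > l2 then
        (if x \<ge> 0 then ereal (c_nu \<nu> * (x / (l1 - l2)) powr (1 / (1 - \<nu>))) else \<infinity>)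
      else
        (if x \<le> 0 then ereal (c_nu \<nu> * (x / (- (l2 - l1))) powr (1 / (1 - \<nu>))) else \<infinity>))"

end

theory Submission
  imports Defs
begin

text \<open>For \<open>l1 \<noteq> l2\<close> the type 2 rate is either infinite or the type 1 formula with the
  intensity replaced by \<open>\<bar>l1 - l2\<bar>\<close>, which is smaller than the intensity it competes with.
  For \<open>l1 = l2 = l\<close> both rates are power functions of \<open>\<bar>x\<bar>\<close>: the type 1 rate is
  \<open>c_nu \<nu> (\<bar>x\<bar>/l)\<^sup>p\<close> with \<open>p = 1/(1-\<nu>)\<close> and the type 2 rate is \<open>c_nu (\<nu>/2) (x\<^sup>2/l)\<^sup>q\<close> with
  \<open>q = 1/(2-\<nu>)\<close>. Since \<open>p > 2q\<close>, the first is the smaller one near \<open>0\<close> and the larger one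
  near infinity, and the two graphs cross exactly once.\<close>

lemma c_nu_pos:
  fixes \<nu> :: real
  assumes "0 < \<nu>" "\<nu> < 1"
  shows "0 < c_nu \<nu>"
proof -
  have "\<nu> powr (1 / (1 - \<nu>)) < \<nu> powr (\<nu> / (1 - \<nu>))"
    using assms by (intro powr_less_mono') (auto simp: divide_strict_right_mono)
  then show ?thesis
    unfolding c_nu_def by simp
qed

lemma powr_less_powr_iff:
  fixes x y e :: real
  assumes "0 < e" "0 < x" "0 < y"
  shows "x powr e < y powr e \<longleftrightarrow> x < y"
  using assms powr_less_mono2 powr_less_cancel2 by (meson less_imp_le)

lemma powr_eq_powr_iff:
  fixes x y e :: real
  assumes "0 < e" "0 < x" "0 < y"
  shows "x powr e = y powr e \<longleftrightarrow> x = y"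
  using powr_less_powr_iff[OF assms] powr_less_powr_iff[OF assms(1,3,2)]
  by (metis linorder_neqE_linordered_idom order_less_irrefl)

lemma powr_functions_cross:
  fixes A B a b :: real
  assumes "0 < A" "0 < B" "b < a"
  obtains \<delta> where "0 < \<delta>"
    and "\<And>t. 0 < t \<Longrightarrow> A * t powr a < B * t powr b \<longleftrightarrow> t < \<delta>"
    and "\<And>t. 0 < t \<Longrightarrow> A * t powr a = B * t powr b \<longleftrightarrow> t = \<delta>"
proof
  define e where "e = a - b"
  define \<delta> where "\<delta> = (B / A) powr (1 / e)"
  have e: "0 < e"
    using assms(3) by (simp add: e_def)
  show \<delta>: "0 < \<delta>"
    using assms by (simp add: \<delta>_def)
  have \<delta>_powr: "\<delta> powr e = B / A"
    using assms e by (simp add: \<delta>_def powr_powr)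
  have split: "A * t powr a = (A * t powr e) * t powr b" for t
    by (simp add: e_def powr_add[symmetric])
  fix t :: real
  assume t: "0 < t"
  have "A * t powr a < B * t powr b \<longleftrightarrow> A * t powr e < B"
    unfolding split using t by simp
  also have "\<dots> \<longleftrightarrow> t powr e < \<delta> powr e"
    unfolding \<delta>_powr using assms(1) by (simp add: pos_less_divide_eq mult.commute)
  finally show "A * t powr a < B * t powr b \<longleftrightarrow> t < \<delta>"
    using powr_less_powr_iff[OF e t \<delta>] by simp
  have "A * t powr a = B * t powr b \<longleftrightarrow> A * t powr e = B"
    unfolding split using t by simp
  also have "\<dots> \<longleftrightarrow> t powr e = \<delta> powr e"
    unfolding \<delta>_powr using assms(1) by (auto simp: field_simps)
  finally show "A * t powr a = B * t powr b \<longleftrightarrow> t = \<delta>"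
    using powr_eq_powr_iff[OF e t \<delta>] by simp
qed

lemma I1_MD_pos:
  fixes \<nu> l1 l2 x :: real
  assumes "0 < l1" "0 < l2" "0 < \<nu>" "\<nu> < 1" "x \<noteq> 0"
  shows "0 < I1_MD \<nu> l1 l2 x"
  using assms c_nu_pos[of \<nu>] by (auto simp: I1_MD_def divide_pos_neg)

lemma I1_MD_less_I2_MD_distinct_rates:
  fixes \<nu> l1 l2 x :: real
  assumes "0 < l1" "0 < l2" "0 < \<nu>" "\<nu> < 1" "l1 \<noteq> l2" "x \<noteq> 0"
  shows "ereal (I1_MD \<nu> l1 l2 x) < I2_MD \<nu> l1 l2 x"
proof -
  define p where "p = 1 / (1 - \<nu>)"
  have p: "0 < p"
    using assms by (simp add: p_def)
  have c: "0 < c_nu \<nu>"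
    using assms c_nu_pos by simp
  consider "l2 < l1" "0 < x" | "l1 < l2" "x < 0" | "I2_MD \<nu> l1 l2 x = \<infinity>"
    using assms by (fastforce simp: I2_MD_def)
  then show ?thesis
  proof cases
    case 1
    then have "(x / l1) powr p < (x / (l1 - l2)) powr p"
      using assms p by (intro powr_less_mono2) (auto intro: divide_strict_left_mono)
    with 1 c show ?thesis
      by (simp add: I1_MD_def I2_MD_def p_def)
  next
    case 2
    then have "-x / l2 < -x / (l2 - l1)"
      using assms by (intro divide_strict_left_mono) auto
    then have "(-x / l2) powr p < (-x / (l2 - l1)) powr p"
      using 2 assms p by (intro powr_less_mono2) (auto simp: divide_nonpos_pos)
    moreover have "-x / (l2 - l1) = x / (l1 - l2)"
      by (metis minus_diff_eq divide_minus_right minus_divide_left)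
    ultimately show ?thesis
      using 2 c
      by (simp add: I1_MD_def I2_MD_def p_def)
  qed simp
qed

lemma I1_MD_same_rate:
  fixes \<nu> l x :: real
  assumes "0 < l"
  shows "I1_MD \<nu> l l x = c_nu \<nu> / l powr (1 / (1 - \<nu>)) * \<bar>x\<bar> powr (1 / (1 - \<nu>))"
proof -
  have "I1_MD \<nu> l l x = c_nu \<nu> * (\<bar>x\<bar> / l) powr (1 / (1 - \<nu>))"
    by (auto simp: I1_MD_def)
  then show ?thesis
    using assms by (simp add: powr_divide)
qed

lemma I2_MD_same_rate:
  fixes \<nu> l x :: real
  assumes "0 < l" "\<nu> < 1"
  shows "I2_MD \<nu> l l x = ereal (c_nu (\<nu>/2) / l powr (1 / (2 - \<nu>)) * \<bar>x\<bar> powr (2 / (2 - \<nu>)))"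
proof -
  have "(x\<^sup>2) powr (1 / (2 - \<nu>)) = \<bar>x\<bar> powr (2 * (1 / (2 - \<nu>)))"
    by (metis abs_ge_zero power2_abs powr_numeral powr_powr)
  then have "(x\<^sup>2 / l) powr (1 / (2 - \<nu>)) = \<bar>x\<bar> powr (2 / (2 - \<nu>)) / l powr (1 / (2 - \<nu>))"
    using assms by (simp add: powr_divide)
  moreover have "\<nu> / 2 / (1 - \<nu> / 2) = \<nu> / (2 - \<nu>)" "1 / (1 - \<nu> / 2) = 2 / (2 - \<nu>)"
    using assms by (simp_all add: field_simps)
  ultimately show ?thesis
    by (simp add: I2_MD_def c_nu_def)
qed

lemma I2_MD_pos:
  fixes \<nu> l1 l2 x :: real
  assumes "0 < l1" "0 < l2" "0 < \<nu>" "\<nu> < 1" "x \<noteq> 0"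
  shows "0 < I2_MD \<nu> l1 l2 x"
proof (cases "l1 = l2")
  case True
  then show ?thesis
    using assms c_nu_pos[of "\<nu>/2"] by (simp add: I2_MD_same_rate)
next
  case False
  then show ?thesis
    using assms I1_MD_pos I1_MD_less_I2_MD_distinct_rates
    by (metis ereal_less(2) order_less_trans)
qed

lemma I1_MD_I2_MD_same_rate_cross:
  fixes \<nu> l :: real
  assumes "0 < l" "0 < \<nu>" "\<nu> < 1"
  obtains \<delta> where "0 < \<delta>"
    and "\<And>x. x \<noteq> 0 \<Longrightarrow> ereal (I1_MD \<nu> l l x) < I2_MD \<nu> l l x \<longleftrightarrow> \<bar>x\<bar> < \<delta>"
    and "\<And>x. x \<noteq> 0 \<Longrightarrow> I2_MD \<nu> l l x = ereal (I1_MD \<nu> l l x) \<longleftrightarrow> \<bar>x\<bar> = \<delta>"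
    and "\<And>x. x \<noteq> 0 \<Longrightarrow> I2_MD \<nu> l l x < ereal (I1_MD \<nu> l l x) \<longleftrightarrow> \<delta> < \<bar>x\<bar>"
proof -
  define A where "A = c_nu \<nu> / l powr (1 / (1 - \<nu>))"
  define B where "B = c_nu (\<nu>/2) / l powr (1 / (2 - \<nu>))"
  have "0 < A" "0 < B"
    using assms c_nu_pos[of \<nu>] c_nu_pos[of "\<nu>/2"] by (simp_all add: A_def B_def)
  moreover have "2 / (2 - \<nu>) < 1 / (1 - \<nu>)"
    using assms by (simp add: field_simps)
  ultimately obtain \<delta> where "0 < \<delta>"
    and less: "\<And>t. 0 < t \<Longrightarrow> A * t powr (1 / (1 - \<nu>)) < B * t powr (2 / (2 - \<nu>)) \<longleftrightarrow> t < \<delta>"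
    and eq: "\<And>t. 0 < t \<Longrightarrow> A * t powr (1 / (1 - \<nu>)) = B * t powr (2 / (2 - \<nu>)) \<longleftrightarrow> t = \<delta>"
    using powr_functions_cross by blast
  show ?thesis
  proof (rule that[OF \<open>0 < \<delta>\<close>])
    fix x :: real
    assume "x \<noteq> 0"
    then show "ereal (I1_MD \<nu> l l x) < I2_MD \<nu> l l x \<longleftrightarrow> \<bar>x\<bar> < \<delta>"
      and "I2_MD \<nu> l l x = ereal (I1_MD \<nu> l l x) \<longleftrightarrow> \<bar>x\<bar> = \<delta>"
      using less[of "\<bar>x\<bar>"] eq[of "\<bar>x\<bar>"] assms
      by (auto simp: I1_MD_same_rate I2_MD_same_rate A_def B_def)
    then show "I2_MD \<nu> l l x < ereal (I1_MD \<nu> l l x) \<longleftrightarrow> \<delta> < \<bar>x\<bar>"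
      by (metis linorder_neqE order_less_asym order_less_irrefl)
  qed
qed

theorem proposition5p3:
  fixes \<nu> l1 l2 :: real
  assumes "l1 > 0" and "l2 > 0" and "0 < \<nu>" and "\<nu> < 1"
  shows "I1_MD \<nu> l1 l2 0 = 0 \<and> I2_MD \<nu> l1 l2 0 = 0
    \<and> (l1 \<noteq> l2 \<longrightarrow> (\<forall>x. x \<noteq> 0 \<longrightarrow>
          I2_MD \<nu> l1 l2 x > ereal (I1_MD \<nu> l1 l2 x) \<and> I1_MD \<nu> l1 l2 x > 0))
    \<and> (l1 = l2 \<longrightarrow> (\<exists>\<delta>>0. \<forall>x.
          (0 < \<bar>x\<bar> \<and> \<bar>x\<bar> < \<delta> \<longrightarrow>
             I2_MD \<nu> l1 l2 x > ereal (I1_MD \<nu> l1 l2 x) \<and> I1_MD \<nu> l1 l2 x > 0)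
        \<and> (\<bar>x\<bar> > \<delta> \<longrightarrow>
             ereal (I1_MD \<nu> l1 l2 x) > I2_MD \<nu> l1 l2 x \<and> I2_MD \<nu> l1 l2 x > 0)
        \<and> (\<bar>x\<bar> = \<delta> \<longrightarrow>
             I2_MD \<nu> l1 l2 x = ereal (I1_MD \<nu> l1 l2 x) \<and> I1_MD \<nu> l1 l2 x > 0)))"
proof -
  obtain \<delta> where "0 < \<delta>"
    and "\<And>x. x \<noteq> 0 \<Longrightarrow> ereal (I1_MD \<nu> l1 l1 x) < I2_MD \<nu> l1 l1 x \<longleftrightarrow> \<bar>x\<bar> < \<delta>"
    and "\<And>x. x \<noteq> 0 \<Longrightarrow> I2_MD \<nu> l1 l1 x = ereal (I1_MD \<nu> l1 l1 x) \<longleftrightarrow> \<bar>x\<bar> = \<delta>"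
    and "\<And>x. x \<noteq> 0 \<Longrightarrow> I2_MD \<nu> l1 l1 x < ereal (I1_MD \<nu> l1 l1 x) \<longleftrightarrow> \<delta> < \<bar>x\<bar>"
    using assms I1_MD_I2_MD_same_rate_cross[of l1 \<nu>] by blast
  moreover have "x \<noteq> 0" if "\<delta> \<le> \<bar>x\<bar>" for x
    using that \<open>0 < \<delta>\<close> by auto
  ultimately show ?thesis
  proof (intro conjI impI allI exI[of _ \<delta>])
    show "I1_MD \<nu> l1 l2 0 = 0" "I2_MD \<nu> l1 l2 0 = 0"
      by (simp_all add: I1_MD_def I2_MD_def zero_ereal_def)
  qed (use assms I1_MD_pos[OF assms] I2_MD_pos[OF assms] I1_MD_less_I2_MD_distinct_rates[OF assms]
      in \<open>auto simp: less_imp_le\<close>)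
qed

end
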